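(* Let $(E,\|\cdot\|)$ be an $n$-dimensional normed space over $K$ such that for each subspace $F\subseteq E$ with $\dim E/F=2$ one has $\dim_{K^\vee}(E/F)^\vee=1$. Then all $(n-1)$-dimensional subspaces of $E$ are isometrically isomorphic to each other.
   Context: $K$ is a complete non-archimedean non-trivially valued field which is not spherically complete; $K^\vee$ is a fixed spherically complete immediate extension of $K$. Normed spaces are finite-dimensional non-archimedean normed spaces over $K$; quotients carry the quotient norm $\|\pi(x)\|=\inf_{d\in F}\|x-d\|$. A subset $X\subseteq E\setminus\{0\}$ is orthogonal if $\|\sum\lambda_ix_i\|=\max\|\lambda_ix_i\|$ for finitely many distinct $x_i\in X$, $\lambda_i\in K$; $\dim_{K^\vee}E^\vee$ denotes the cardinality of a maximal orthogonal subset of $E$. *)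

theory Defs
  imports Complex_Main
begin

definition nonarch_abs :: "('k::field \<Rightarrow> real) \<Rightarrow> bool" where
  "nonarch_abs av \<longleftrightarrow>
     (\<forall>x. av x \<ge> 0) \<and> (\<forall>x. av x = 0 \<longleftrightarrow> x = 0) \<and>
     (\<forall>x y. av (x * y) = av x * av y) \<and>
     (\<forall>x y. av (x + y) \<le> max (av x) (av y))"

definition nontrivially_valued :: "('k::field \<Rightarrow> real) \<Rightarrow> bool" where
  "nontrivially_valued av \<longleftrightarrow> (\<exists>x. av x \<noteq> 0 \<and> av x \<noteq> 1)"

definition complete_valued :: "('k::field \<Rightarrow> real) \<Rightarrow> bool" where
  "complete_valued av \<longleftrightarrow>
     (\<forall>s :: nat \<Rightarrow> 'k.
        (\<forall>e>0. \<exists>N. \<forall>m\<ge>N. \<forall>n\<ge>N. av (s m - s n) < e) \<longrightarrow>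
        (\<exists>l. (\<lambda>n. av (s n - l)) \<longlonglongrightarrow> 0))"

definition closed_ball_av :: "('k::field \<Rightarrow> real) \<Rightarrow> 'k \<Rightarrow> real \<Rightarrow> 'k set" where
  "closed_ball_av av a r = {x. av (x - a) \<le> r}"

definition spherically_complete :: "('k::field \<Rightarrow> real) \<Rightarrow> bool" where
  "spherically_complete av \<longleftrightarrow>
     (\<forall>\<C>. \<C> \<noteq> {} \<and> (\<forall>B\<in>\<C>. \<exists>a r. r > 0 \<and> B = closed_ball_av av a r) \<and>
          (\<forall>B1\<in>\<C>. \<forall>B2\<in>\<C>. B1 \<subseteq> B2 \<or> B2 \<subseteq> B1)
          \<longrightarrow> \<Inter>\<C> \<noteq> {})"

text \<open>The space E is the whole type 'v, a vector space over 'k via scale.\<close>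
definition nonarch_norm ::
  "('k::field \<Rightarrow> real) \<Rightarrow> ('k \<Rightarrow> 'v::ab_group_add \<Rightarrow> 'v) \<Rightarrow> ('v \<Rightarrow> real) \<Rightarrow> bool" where
  "nonarch_norm av scale N \<longleftrightarrow>
     (\<forall>x. N x \<ge> 0) \<and> (\<forall>x. N x = 0 \<longleftrightarrow> x = 0) \<and>
     (\<forall>c x. N (scale c x) = av c * N x) \<and>
     (\<forall>x y. N (x + y) \<le> max (N x) (N y))"

definition coset :: "'v::ab_group_add set \<Rightarrow> 'v \<Rightarrow> 'v set" where
  "coset F x = {x + d | d. d \<in> F}"

definition quot :: "'v::ab_group_add set \<Rightarrow> 'v set set" where
  "quot F = range (coset F)"

definition qnorm :: "('v::ab_group_add \<Rightarrow> real) \<Rightarrow> 'v set \<Rightarrow> 'v \<Rightarrow> real" where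
  "qnorm N F x = Inf {N (x - d) | d. d \<in> F}"

text \<open>Linear combinations in E/F are computed from
  arbitrary representatives r C \<in> C.\<close>
definition quot_orthogonal ::
  "('k::field \<Rightarrow> 'v::ab_group_add \<Rightarrow> 'v) \<Rightarrow> ('v \<Rightarrow> real) \<Rightarrow> 'v set \<Rightarrow> 'v set set \<Rightarrow> bool" where
  "quot_orthogonal scale N F X \<longleftrightarrow>
     X \<subseteq> quot F - {F} \<and>
     (\<forall>S lam r. S \<subseteq> X \<and> finite S \<and> S \<noteq> {} \<and> (\<forall>C\<in>S. r C \<in> C) \<longrightarrow>
        qnorm N F (\<Sum>C\<in>S. scale (lam C) (r C)) =
        Max ((\<lambda>C. qnorm N F (scale (lam C) (r C))) ` S))"

definition quot_max_orthogonal ::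
  "('k::field \<Rightarrow> 'v::ab_group_add \<Rightarrow> 'v) \<Rightarrow> ('v \<Rightarrow> real) \<Rightarrow> 'v set \<Rightarrow> 'v set set \<Rightarrow> bool" where
  "quot_max_orthogonal scale N F X \<longleftrightarrow>
     quot_orthogonal scale N F X \<and>
     (\<forall>Y. quot_orthogonal scale N F Y \<and> X \<subseteq> Y \<longrightarrow> Y = X)"

text \<open>dim_{K^\<or>} (E/F)^\<or>: the cardinality of a maximal orthogonal subset of E/F.\<close>
definition dim_vee_quot ::
  "('k::field \<Rightarrow> 'v::ab_group_add \<Rightarrow> 'v) \<Rightarrow> ('v \<Rightarrow> real) \<Rightarrow> 'v set \<Rightarrow> nat" where
  "dim_vee_quot scale N F = card (SOME X. quot_max_orthogonal scale N F X)"

definition isometrically_isomorphic ::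
  "('k::field \<Rightarrow> 'v::ab_group_add \<Rightarrow> 'v) \<Rightarrow> ('v \<Rightarrow> real) \<Rightarrow> 'v set \<Rightarrow> 'v set \<Rightarrow> bool" where
  "isometrically_isomorphic scale N F1 F2 \<longleftrightarrow>
     (\<exists>f. bij_betw f F1 F2 \<and>
          (\<forall>x\<in>F1. \<forall>y\<in>F1. f (x + y) = f x + f y) \<and>
          (\<forall>c. \<forall>x\<in>F1. f (scale c x) = scale c (f x)) \<and>
          (\<forall>x\<in>F1. N (f x) = N x))"

end

theory Submission
  imports Defs
begin

(* Let H1 \<noteq> H2 be hyperplanes and F = H1 \<inter> H2, of codimension 2. Say y and c have the same
   profile over F if N (y - d) = N (c - d) for all d \<in> F; then f + k y \<mapsto> f + k c (f \<in> F) is an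
   isometric isomorphism of span (F \<union> {y}) onto span (F \<union> {c}).
   By hypothesis some maximal orthogonal subset of E/F is a single class c + F. For a hyperplane
   H \<supseteq> F and a \<in> H - F the pair {c + F, a + F} is then not orthogonal, so, up to exchanging the
   roles of a and c, some l c + v with v \<in> H has smaller quotient norm than l c. Subtracting a
   nearly optimal element of F gives y \<in> H with N (c - y) < N (c - d) for all d \<in> F, and by the
   ultrametric inequality y has the same profile as c. Hence H1 and H2 are both isometric to
   span (F \<union> {c}). Only the ultrametric absolute value of K is used, none of its other
   hypotheses. *)

lemma mem_coset_iff: "y \<in> coset F x \<longleftrightarrow> y - x \<in> F"
  unfolding coset_def by (auto intro: exI[of _ "y - x"])

lemma isometrically_isomorphic_refl: "isometrically_isomorphic scale N F F"
  unfolding isometrically_isomorphic_def by (intro exI[of _ id]) simp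

lemma quot_max_orthogonal_exists: "\<exists>X. quot_max_orthogonal scale N F X"
proof -
  let ?A = "{X. quot_orthogonal scale N F X}"
  have "\<exists>M\<in>?A. \<forall>X\<in>?A. M \<subseteq> X \<longrightarrow> X = M"
  proof (rule subset_Zorn')
    fix \<C> assume ch: "subset.chain ?A \<C>"
    show "\<Union>\<C> \<in> ?A"
      unfolding mem_Collect_eq quot_orthogonal_def
    proof (intro conjI allI impI)
      show "\<Union>\<C> \<subseteq> quot F - {F}"
        using ch unfolding subset.chain_def quot_orthogonal_def by blast
    next
      fix S lam r
      assume S: "S \<subseteq> \<Union>\<C> \<and> finite S \<and> S \<noteq> {} \<and> (\<forall>C\<in>S. r C \<in> C)"
      then obtain X where "X \<in> \<C>" "S \<subseteq> X"
        using finite_subset_Union_chain[OF _ _ _ ch] by blast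
      moreover have "quot_orthogonal scale N F X"
        using \<open>X \<in> \<C>\<close> ch unfolding subset.chain_def by blast
      ultimately show "qnorm N F (\<Sum>C\<in>S. scale (lam C) (r C)) =
          Max ((\<lambda>C. qnorm N F (scale (lam C) (r C))) ` S)"
        using S unfolding quot_orthogonal_def by blast
    qed
  qed
  then show ?thesis
    unfolding quot_max_orthogonal_def by auto
qed

definition span_insert_coeff ::
  "('k::field \<Rightarrow> 'v::ab_group_add \<Rightarrow> 'v) \<Rightarrow> 'v set \<Rightarrow> 'v \<Rightarrow> 'v \<Rightarrow> 'k" where
  "span_insert_coeff scale F y x = (THE k. x - scale k y \<in> F)"

definition span_insert_exchange ::
  "('k::field \<Rightarrow> 'v::ab_group_add \<Rightarrow> 'v) \<Rightarrow> 'v set \<Rightarrow> 'v \<Rightarrow> 'v \<Rightarrow> 'v \<Rightarrow> 'v" where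
  "span_insert_exchange scale F y z x = x + scale (span_insert_coeff scale F y x) (z - y)"

context vector_space
begin

lemma coset_eq_self_iff:
  assumes "subspace F"
  shows "coset F x = F \<longleftrightarrow> x \<in> F"
proof
  assume "coset F x = F"
  then show "x \<in> F"
    using mem_coset_iff[of x F x] subspace_0[OF assms] by simp
next
  assume "x \<in> F"
  then show "coset F x = F"
    using subspace_add[OF assms] subspace_diff[OF assms]
    by (force simp: mem_coset_iff)
qed

lemma dim_vee_quot_eq_1E:
  assumes F: "subspace F" and "dim_vee_quot scale N F = 1"
  obtains c where "c \<notin> F" "quot_max_orthogonal scale N F {coset F c}"
proof -
  obtain X where X: "quot_max_orthogonal scale N F X" "card X = 1"
    using someI_ex[OF quot_max_orthogonal_exists] assms(2) unfolding dim_vee_quot_def by blast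
  then obtain C where "X = {C}"
    by (auto simp: card_1_singleton_iff)
  moreover have "C \<in> quot F - {F}"
    using X(1) \<open>X = {C}\<close> unfolding quot_max_orthogonal_def quot_orthogonal_def by blast
  then obtain c where "C = coset F c" "c \<notin> F"
    unfolding quot_def using coset_eq_self_iff[OF F] by auto
  ultimately show ?thesis
    using X(1) that by blast
qed

lemma span_insert_subspace:
  assumes "subspace F"
  shows "span (insert y F) = {f + scale k y | f k. f \<in> F}"
proof -
  have "x \<in> span (insert y F) \<longleftrightarrow> (\<exists>f k. f \<in> F \<and> x = f + scale k y)" for x
    using span_breakdown_eq[of x y F] assms by (metis span_eq_iff diff_add_cancel add_diff_cancel)
  then show ?thesis
    by blast
qed

lemma span_insert_coeff_eq:
  assumes F: "subspace F" and y: "y \<notin> F" and f: "f \<in> F"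
  shows "span_insert_coeff scale F y (f + scale k y) = k"
  unfolding span_insert_coeff_def
proof (rule the_equality)
  show "f + scale k y - scale k y \<in> F"
    using f by simp
next
  fix k' assume "f + scale k y - scale k' y \<in> F"
  moreover have "f + scale k y - scale k' y - f = scale (k - k') y"
    by (simp add: scale_left_diff_distrib)
  ultimately have "scale (k - k') y \<in> F"
    using subspace_diff[OF F _ f] by metis
  then have "k - k' = 0"
    using subspace_scale[OF F, of _ "inverse (k - k')"] y by (metis scale_scale left_inverse scale_one)
  then show "k' = k"
    by simp
qed

lemma span_insert_exchange_eq:
  assumes "subspace F" "y \<notin> F" "f \<in> F"
  shows "span_insert_exchange scale F y z (f + scale k y) = f + scale k z"
  unfolding span_insert_exchange_def span_insert_coeff_eq[OF assms]
  by (simp add: scale_right_diff_distrib)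

end

context finite_dimensional_vector_space
begin

lemma dim_Int_distinct_hyperplanes:
  assumes H1: "subspace H1" and H2: "subspace H2" and dim_UNIV: "dim (UNIV :: 'b set) = n"
    and dim_H1: "dim H1 = n - 1" and dim_H2: "dim H2 = n - 1" and "H1 \<noteq> H2"
  shows "dim (H1 \<inter> H2) + 2 = n"
proof -
  let ?S = "{x + y |x y. x \<in> H1 \<and> y \<in> H2}"
  obtain z where z: "z \<in> H2" "z \<notin> H1"
    using subspace_dim_equal[OF H2 H1] dim_H1 dim_H2 \<open>H1 \<noteq> H2\<close> by auto
  have "H1 \<subseteq> ?S" "z \<in> ?S"
    using subspace_0[OF H1] subspace_0[OF H2] z(1) by force+
  moreover have "H1 \<noteq> ?S"
    using \<open>z \<in> ?S\<close> z(2) by blast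
  ultimately have "dim H1 < dim ?S"
    using subspace_dim_equal[OF H1 subspace_sums[OF H1 H2]] by (meson not_le)
  moreover have "dim ?S \<le> n"
    using dim_subset[of ?S UNIV] dim_UNIV by simp
  ultimately show ?thesis
    using dim_sums_Int[OF H1 H2] dim_H1 dim_H2 by linarith
qed

lemma span_insert_eq_subspace:
  assumes F: "subspace F" and H: "subspace H" and "F \<subseteq> H" "y \<in> H" "y \<notin> F"
    and "dim H \<le> dim F + 1"
  shows "span (insert y F) = H"
proof (rule subspace_dim_equal)
  show "span (insert y F) \<subseteq> H"
    using assms by (intro span_minimal) auto
  show "dim H \<le> dim (span (insert y F))"
    using dim_insert[of y F] assms by (simp add: span_eq_iff[THEN iffD2, OF F])
qed (use H in simp_all)

end

locale nonarch_normed_space = vector_space scale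
  for scale :: "'k::field \<Rightarrow> 'v::ab_group_add \<Rightarrow> 'v" +
  fixes av :: "'k \<Rightarrow> real" and N :: "'v \<Rightarrow> real"
  assumes nonarch_abs: "nonarch_abs av" and nonarch_norm: "nonarch_norm av scale N"
begin

lemma av_nonneg: "av x \<ge> 0"
  using nonarch_abs unfolding nonarch_abs_def by blast

lemma av_eq_0_iff: "av x = 0 \<longleftrightarrow> x = 0"
  using nonarch_abs unfolding nonarch_abs_def by blast

lemma av_mult: "av (x * y) = av x * av y"
  using nonarch_abs unfolding nonarch_abs_def by blast

lemma av_pos: "x \<noteq> 0 \<Longrightarrow> av x > 0"
  using av_nonneg av_eq_0_iff by (metis less_eq_real_def)

lemma av_minus_one: "av (- 1) = 1"
proof -
  have "av 1 = 1"
    using av_mult[of 1 1] av_eq_0_iff[of 1] by simp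
  then have "av (- 1) * av (- 1) = 1"
    using av_mult[of "- 1" "- 1"] by simp
  then show ?thesis
    using av_nonneg[of "- 1"] square_eq_1_iff[of "av (- 1)"] by linarith
qed

lemma N_nonneg: "N x \<ge> 0"
  using nonarch_norm unfolding nonarch_norm_def by blast

lemma N_eq_0_iff: "N x = 0 \<longleftrightarrow> x = 0"
  using nonarch_norm unfolding nonarch_norm_def by blast

lemma N_scale: "N (scale c x) = av c * N x"
  using nonarch_norm unfolding nonarch_norm_def by blast

lemma N_add_le_max: "N (x + y) \<le> max (N x) (N y)"
  using nonarch_norm unfolding nonarch_norm_def by blast

lemma N_minus: "N (- x) = N x"
  using N_scale[of "- 1" x] av_minus_one by (simp add: scale_minus_left)

lemma N_minus_commute: "N (x - y) = N (y - x)"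
  using N_minus[of "x - y"] by simp

lemma N_add_eq_if_less:
  assumes "N x < N y"
  shows "N (x + y) = N y"
proof -
  have "N y \<le> max (N (x + y)) (N (- x))"
    using N_add_le_max[of "x + y" "- x"] by simp
  then show ?thesis
    using N_add_le_max[of x y] N_minus[of x] assms by linarith
qed

lemma qnorm_le: "d \<in> F \<Longrightarrow> qnorm N F x \<le> N (x - d)"
  unfolding qnorm_def by (rule cInf_lower) (auto intro: bdd_belowI[of _ 0] N_nonneg)

lemma qnorm_lessE:
  assumes "0 \<in> F" "qnorm N F x < t"
  obtains d where "d \<in> F" "N (x - d) < t"
  using cInf_lessD[of "{N (x - d) | d. d \<in> F}" t] assms unfolding qnorm_def by blast

lemma qnorm_add_le_max:
  assumes F: "subspace F"
  shows "qnorm N F (x + y) \<le> max (qnorm N F x) (qnorm N F y)"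
proof (rule ccontr)
  assume "\<not> ?thesis"
  then obtain d e where "d \<in> F" "N (x - d) < qnorm N F (x + y)"
    and "e \<in> F" "N (y - e) < qnorm N F (x + y)"
    using qnorm_lessE[OF subspace_0[OF F]] by (metis max_less_iff_conj not_le)
  moreover have "qnorm N F (x + y) \<le> N ((x - d) + (y - e))"
    using qnorm_le[OF subspace_add[OF F \<open>d \<in> F\<close> \<open>e \<in> F\<close>], of "x + y"] by (simp add: algebra_simps)
  ultimately show False
    using N_add_le_max[of "x - d" "y - e"] by linarith
qed

definition same_profile :: "'v set \<Rightarrow> 'v \<Rightarrow> 'v \<Rightarrow> bool" where
  "same_profile F y z \<longleftrightarrow> (\<forall>d\<in>F. N (y - d) = N (z - d))"

lemma same_profile_sym: "same_profile F y z \<Longrightarrow> same_profile F z y"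
  unfolding same_profile_def by simp

lemma same_profile_trans: "same_profile F x y \<Longrightarrow> same_profile F y z \<Longrightarrow> same_profile F x z"
  unfolding same_profile_def by simp

lemma same_profile_notin:
  assumes "same_profile F y c" "c \<notin> F"
  shows "y \<notin> F"
proof
  assume "y \<in> F"
  then have "N (c - y) = 0"
    using assms(1) N_eq_0_iff[of 0] unfolding same_profile_def by force
  then show False
    using assms(2) \<open>y \<in> F\<close> N_eq_0_iff by simp
qed

lemma same_profile_if_closer:
  assumes "\<And>d. d \<in> F \<Longrightarrow> N (c - y) < N (c - d)"
  shows "same_profile F y c"
  unfolding same_profile_def
proof
  fix d assume "d \<in> F"
  have "N ((y - c) + (c - d)) = N (c - d)"
    using assms[OF \<open>d \<in> F\<close>] N_minus_commute[of c y] by (intro N_add_eq_if_less) simp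
  then show "N (y - d) = N (c - d)"
    by simp
qed

lemma same_profile_affine:
  assumes F: "subspace F" and "same_profile F y z" "f \<in> F"
  shows "same_profile F (scale k y + f) (scale k z + f)"
proof (cases "k = 0")
  case False
  have "scale k x + f - d = scale k (x - scale (inverse k) (d - f))" for x d
    using False by (simp add: scale_right_diff_distrib)
  moreover have "scale (inverse k) (d - f) \<in> F" if "d \<in> F" for d
    using F that \<open>f \<in> F\<close> by (simp add: subspace_scale subspace_diff)
  ultimately show ?thesis
    using assms(2) unfolding same_profile_def by (simp add: N_scale)
qed (simp add: same_profile_def)

lemma same_profile_N_add_scale:
  assumes F: "subspace F" and "same_profile F y z" "f \<in> F"
  shows "N (f + scale k z) = N (f + scale k y)"
proof -
  have "N (scale k y + f - 0) = N (scale k z + f - 0)"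
    using same_profile_affine[OF assms, of k] subspace_0[OF F] unfolding same_profile_def by blast
  then show ?thesis
    by (simp add: add.commute)
qed

lemma isometrically_isomorphic_span_insert:
  assumes F: "subspace F" and "y \<notin> F" "z \<notin> F" and profile: "same_profile F y z"
  shows "isometrically_isomorphic scale N (span (insert y F)) (span (insert z F))"
proof -
  let ?T = "span_insert_exchange scale F y z"
  note exchange = span_insert_exchange_eq[OF F]
  have add: "(f + scale k y) + (f' + scale k' y) = (f + f') + scale (k + k') y" for f f' k k' y
    by (simp add: scale_left_distrib algebra_simps)
  have mult: "scale c (f + scale k y) = scale c f + scale (c * k) y" for c f k y
    by (simp add: scale_right_distrib)
  show ?thesis
    unfolding isometrically_isomorphic_def span_insert_subspace[OF F]
  proof (intro exI[of _ ?T] conjI ballI allI)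
    show "bij_betw ?T {f + scale k y |f k. f \<in> F} {f + scale k z |f k. f \<in> F}"
      by (rule bij_betw_byWitness[where f' = "span_insert_exchange scale F z y"])
        (use assms in \<open>fastforce simp: exchange\<close>)+
  next
    fix x x' assume "x \<in> {f + scale k y |f k. f \<in> F}" "x' \<in> {f + scale k y |f k. f \<in> F}"
    then show "?T (x + x') = ?T x + ?T x'"
      using assms subspace_add[OF F] by (auto simp: add exchange)
  next
    fix c x assume "x \<in> {f + scale k y |f k. f \<in> F}"
    then show "?T (scale c x) = scale c (?T x)"
      using assms subspace_scale[OF F] by (auto simp: mult exchange)
  next
    fix x assume "x \<in> {f + scale k y |f k. f \<in> F}"
    then show "N (?T x) = N x"
      using assms same_profile_N_add_scale[OF F profile] by (auto simp: exchange)
  qed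
qed

lemma quot_max_orthogonal_singletonE:
  assumes F: "subspace F" and max: "quot_max_orthogonal scale N F {C}"
    and A: "A \<in> quot F - {F}" "A \<noteq> C"
  obtains r s l m where "r \<in> C" "s \<in> A"
    "qnorm N F (scale l r + scale m s) < max (qnorm N F (scale l r)) (qnorm N F (scale m s))"
proof -
  have "\<not> quot_orthogonal scale N F {C, A}"
    using max A(2) unfolding quot_max_orthogonal_def by blast
  moreover have "C \<in> quot F - {F}"
    using max unfolding quot_max_orthogonal_def quot_orthogonal_def by blast
  ultimately obtain S lam r where S: "S \<subseteq> {C, A}" "S \<noteq> {}" "\<forall>D\<in>S. r D \<in> D"
    and ne: "qnorm N F (\<Sum>D\<in>S. scale (lam D) (r D)) \<noteq> Max ((\<lambda>D. qnorm N F (scale (lam D) (r D))) ` S)"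
    using A(1) unfolding quot_orthogonal_def by (auto simp: finite_subset)
  have "S \<noteq> {C}" "S \<noteq> {A}"
    using ne by auto
  then have "S = {C, A}"
    using S(1,2) by blast
  then have "qnorm N F (scale (lam C) (r C) + scale (lam A) (r A)) \<noteq>
      max (qnorm N F (scale (lam C) (r C))) (qnorm N F (scale (lam A) (r A)))"
    using ne A(2) by simp
  then have "qnorm N F (scale (lam C) (r C) + scale (lam A) (r A)) <
      max (qnorm N F (scale (lam C) (r C))) (qnorm N F (scale (lam A) (r A)))"
    using qnorm_add_le_max[OF F] by (simp add: order.strict_iff_order)
  moreover have "r C \<in> C" "r A \<in> A"
    using S(3) \<open>S = {C, A}\<close> by auto
  ultimately show ?thesis
    by (rule that[rotated 2])
qed

lemma exists_same_profile_if_qnorm_less: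
  assumes F: "subspace F" and H: "subspace H" "F \<subseteq> H" and "x - c \<in> F" "v \<in> H"
    and less: "qnorm N F (scale l x + v) < qnorm N F (scale l x)"
  obtains y where "y \<in> H" "y \<notin> F" "same_profile F y c"
proof -
  obtain e where e: "e \<in> F" "N (scale l x + v - e) < qnorm N F (scale l x)"
    using qnorm_lessE[OF subspace_0[OF F] less] .
  have "l \<noteq> 0"
  proof
    assume "l = 0"
    then show False
      using e(2) qnorm_le[OF subspace_0[OF F], of 0] N_nonneg[of "v - e"] N_eq_0_iff[of 0] by simp
  qed
  define y where "y = c - scale (inverse l) (scale l x + v - e)"
  have c_minus_y: "scale l (c - y) = scale l x + v - e"
    using \<open>l \<noteq> 0\<close> unfolding y_def by simp
  have "c - x \<in> H" "v - e \<in> H"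
    using subspace_neg[OF F \<open>x - c \<in> F\<close>] subspace_diff[OF H(1) \<open>v \<in> H\<close>] e(1) H(2) by auto
  moreover have "y = (c - x) - scale (inverse l) (v - e)"
    using \<open>l \<noteq> 0\<close> unfolding y_def by (simp add: scale_right_diff_distrib scale_right_distrib algebra_simps)
  ultimately have "y \<in> H"
    using subspace_diff[OF H(1)] subspace_scale[OF H(1)] by metis
  have closer: "N (c - y) < N (c - d)" if "d \<in> F" for d
  proof -
    have "x - c + d \<in> F"
      using F \<open>x - c \<in> F\<close> that by (simp add: subspace_add)
    have "av l * N (c - y) < qnorm N F (scale l x)"
      using e(2) c_minus_y N_scale by metis
    also have "\<dots> \<le> N (scale l x - scale l (x - c + d))"
      using qnorm_le[OF subspace_scale[OF F \<open>x - c + d \<in> F\<close>]] .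
    also have "scale l x - scale l (x - c + d) = scale l (c - d)"
      by (metis scale_right_diff_distrib diff_add_cancel diff_diff_eq2 add_diff_cancel_left')
    also have "N (scale l (c - d)) = av l * N (c - d)"
      by (rule N_scale)
    finally show ?thesis
      using av_pos[OF \<open>l \<noteq> 0\<close>] by simp
  qed
  show ?thesis
  proof (rule that)
    show "y \<in> H" by fact
    show "y \<notin> F"
      using closer by blast
    show "same_profile F y c"
      using closer by (rule same_profile_if_closer)
  qed
qed

lemma same_profile_exchange:
  assumes F: "subspace F" and "y \<in> span (insert c F)" "y \<notin> F" "same_profile F y a"
  obtains z where "z \<in> span (insert a F)" "z \<notin> F" "same_profile F z c"
proof -
  obtain f k where f: "f \<in> F" and y: "y = f + scale k c"
    using assms(2) span_insert_subspace[OF F] by blast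
  have "k \<noteq> 0"
    using assms(3) f y by auto
  have "c \<notin> F"
  proof
    assume "c \<in> F"
    then show False
      using subspace_add[OF F f subspace_scale[OF F \<open>c \<in> F\<close>]] y assms(3) by simp
  qed
  let ?z = "scale (inverse k) a + - scale (inverse k) f"
  have "same_profile F ?z (scale (inverse k) y + - scale (inverse k) f)"
    by (rule same_profile_affine[OF F same_profile_sym[OF assms(4)] subspace_neg[OF F subspace_scale[OF F f]]])
  also have "scale (inverse k) y + - scale (inverse k) f = c"
    using \<open>k \<noteq> 0\<close> y by (simp add: scale_right_distrib)
  finally have "same_profile F ?z c" .
  moreover have "?z \<in> span (insert a F)"
    by (intro span_add span_neg span_scale span_base) (use f in auto)
  ultimately show ?thesis
    using that same_profile_notin \<open>c \<notin> F\<close> by blast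
qed

lemma exists_same_profile_if_qnorm_less_max:
  assumes F: "subspace F" and H: "subspace H" "F \<subseteq> H" and "a \<in> H" "r - c \<in> F" "s - a \<in> F"
    and less: "qnorm N F (scale l r + scale m s) < max (qnorm N F (scale l r)) (qnorm N F (scale m s))"
  obtains y where "y \<in> H" "y \<notin> F" "same_profile F y c"
proof -
  have "s \<in> H"
    using subspace_add[OF H(1) \<open>a \<in> H\<close>, of "s - a"] \<open>s - a \<in> F\<close> H(2) by auto
  consider "qnorm N F (scale l r + scale m s) < qnorm N F (scale l r)"
    | "qnorm N F (scale m s + scale l r) < qnorm N F (scale m s)"
    using less by (metis add.commute less_max_iff_disj)
  then show ?thesis
  proof cases
    case 1
    show ?thesis
      using exists_same_profile_if_qnorm_less[OF F H \<open>r - c \<in> F\<close> _ 1]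
        subspace_scale[OF H(1) \<open>s \<in> H\<close>] that by blast
  next
    case 2
    have "scale l r \<in> span (insert c F)"
      using \<open>r - c \<in> F\<close> by (metis diff_add_cancel span_add span_base span_scale insertI1 insertI2)
    moreover have "F \<subseteq> span (insert c F)"
      by (meson span_superset subset_insertI subset_trans)
    ultimately obtain y where "y \<in> span (insert c F)" "y \<notin> F" "same_profile F y a"
      using exists_same_profile_if_qnorm_less[OF F subspace_span _ \<open>s - a \<in> F\<close> _ 2] by blast
    then obtain z where "z \<in> span (insert a F)" "z \<notin> F" "same_profile F z c"
      by (rule same_profile_exchange[OF F])
    moreover have "span (insert a F) \<subseteq> H"
      using \<open>a \<in> H\<close> H by (intro span_minimal) auto
    ultimately show ?thesis
      using that by blast
  qed
qed

lemma exists_same_profile_in_subspace: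
  assumes F: "subspace F" and H: "subspace H" "F \<subset> H"
    and max: "quot_max_orthogonal scale N F {coset F c}"
  obtains y where "y \<in> H" "y \<notin> F" "same_profile F y c"
proof -
  obtain a where a: "a \<in> H" "a \<notin> F"
    using H(2) by blast
  have "coset F c \<in> quot F - {F}"
    using max unfolding quot_max_orthogonal_def quot_orthogonal_def by blast
  then have "c \<notin> F"
    using coset_eq_self_iff[OF F] by blast
  show ?thesis
  proof (cases "coset F a = coset F c")
    case True
    then have "c - a \<in> F"
      using mem_coset_iff[of c F] subspace_0[OF F] by (metis diff_self)
    then have "c \<in> H"
      using subspace_add[OF H(1) a(1), of "c - a"] H(2) by auto
    then show ?thesis
      using that \<open>c \<notin> F\<close> unfolding same_profile_def by blast
  next
    case False
    have "coset F a \<in> quot F - {F}"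
      using a(2) coset_eq_self_iff[OF F] unfolding quot_def by blast
    then obtain r s l m where "r - c \<in> F" "s - a \<in> F"
      and "qnorm N F (scale l r + scale m s) < max (qnorm N F (scale l r)) (qnorm N F (scale m s))"
      using quot_max_orthogonal_singletonE[OF F max] False by (metis mem_coset_iff)
    moreover have "F \<subseteq> H"
      using H(2) by blast
    ultimately show ?thesis
      using exists_same_profile_if_qnorm_less_max[OF F H(1) _ a(1)] that by blast
  qed
qed

end

locale finite_dimensional_nonarch_normed_space =
  nonarch_normed_space scale av N + finite_dimensional_vector_space scale Basis
  for scale :: "'k::field \<Rightarrow> 'v::ab_group_add \<Rightarrow> 'v" and av N Basis
begin

lemma isometrically_isomorphic_distinct_hyperplanes:
  assumes H1: "subspace H1" "dim H1 = n - 1" and H2: "subspace H2" "dim H2 = n - 1"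
    and dim_UNIV: "dim (UNIV :: 'v set) = n" and "H1 \<noteq> H2"
    and dim_vee: "dim_vee_quot scale N (H1 \<inter> H2) = 1"
  shows "isometrically_isomorphic scale N H1 H2"
proof -
  let ?F = "H1 \<inter> H2"
  have F: "subspace ?F"
    using H1 H2 by (simp add: subspace_inter)
  have dim_F: "dim ?F + 2 = n"
    using dim_Int_distinct_hyperplanes[OF H1(1) H2(1) dim_UNIV H1(2) H2(2) \<open>H1 \<noteq> H2\<close>] .
  obtain c where max: "quot_max_orthogonal scale N ?F {coset ?F c}"
    using dim_vee_quot_eq_1E[OF F dim_vee] .
  have "dim ?F \<noteq> dim H1" "dim ?F \<noteq> dim H2"
    using dim_F H1(2) H2(2) by linarith+
  then have "?F \<subset> H1" "?F \<subset> H2"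
    by (metis Int_lower1 Int_lower2 psubsetI)+
  then obtain y1 y2 where y1: "y1 \<in> H1" "y1 \<notin> ?F" "same_profile ?F y1 c"
    and y2: "y2 \<in> H2" "y2 \<notin> ?F" "same_profile ?F y2 c"
    using exists_same_profile_in_subspace[OF F H1(1) _ max]
      exists_same_profile_in_subspace[OF F H2(1) _ max] by metis
  have "span (insert y1 ?F) = H1" "span (insert y2 ?F) = H2"
    using span_insert_eq_subspace[OF F] H1 H2 y1 y2 dim_F by auto
  then show ?thesis
    using isometrically_isomorphic_span_insert[OF F y1(2) y2(2)]
      same_profile_trans[OF y1(3) same_profile_sym[OF y2(3)]] by simp
qed

end

theorem mainTheorem8:
  fixes av :: "'k::field \<Rightarrow> real"
    and scale :: "'k \<Rightarrow> 'v::ab_group_add \<Rightarrow> 'v"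
    and N :: "'v \<Rightarrow> real"
    and n :: nat
  assumes K_abs: "nonarch_abs av"
    and K_nontriv: "nontrivially_valued av"
    and K_complete: "complete_valued av"
    and K_not_sph: "\<not> spherically_complete av"
    and E_vs: "vector_space scale"
    and E_findim: "\<exists>B. finite_dimensional_vector_space scale B"
    and E_dim: "vector_space.dim scale UNIV = n"
    and E_norm: "nonarch_norm av scale N"
    and hyp: "\<And>F. module.subspace scale F \<Longrightarrow> vector_space.dim scale F + 2 = n \<Longrightarrow>
                  dim_vee_quot scale N F = 1"
  shows "\<forall>F1 F2. module.subspace scale F1 \<and> vector_space.dim scale F1 = n - 1 \<and>
                module.subspace scale F2 \<and> vector_space.dim scale F2 = n - 1 \<longrightarrow>
                isometrically_isomorphic scale N F1 F2"
proof (intro allI impI, elim conjE)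
  fix H1 H2
  assume H1: "module.subspace scale H1" "vector_space.dim scale H1 = n - 1"
    and H2: "module.subspace scale H2" "vector_space.dim scale H2 = n - 1"
  obtain B where "finite_dimensional_vector_space scale B"
    using E_findim ..
  moreover have "nonarch_normed_space scale av N"
    using E_vs K_abs E_norm by (simp add: nonarch_normed_space_def nonarch_normed_space_axioms_def)
  ultimately interpret finite_dimensional_nonarch_normed_space scale av N B
    by (simp add: finite_dimensional_nonarch_normed_space_def)
  show "isometrically_isomorphic scale N H1 H2"
  proof (cases "H1 = H2")
    case False
    then have "dim (H1 \<inter> H2) + 2 = n"
      using dim_Int_distinct_hyperplanes[OF H1(1) H2(1) E_dim H1(2) H2(2)] by blast
    then show ?thesis
      using isometrically_isomorphic_distinct_hyperplanes[OF H1 H2 E_dim False]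
        hyp[OF subspace_inter[OF H1(1) H2(1)]] by blast
  qed (simp add: isometrically_isomorphic_refl)
qed

end
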